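(* Let $H,A$ be as in the context and let $c\in H$ be a non-trivial central element. For $a\in A$ put $x_a=\langle a,c_{(1)}\rangle c_{(2)}-\langle a,c\rangle 1\in\ker\epsilon\subset H$. Then both $\widetilde{L_c}={\rm span}\{x_a\mid a\in A\}$ and $L_c={\rm span}\{x_a\mid a\in\ker\epsilon\subset A\}$ are stable under the quantum double action $h\triangleright x=h_{(1)}xSh_{(2)}$, $a\triangleright x=\langle a,x_{(1)}\rangle x_{(2)}-\langle a,x\rangle1$. Moreover, for $a,b\in A$ (with $a\in\ker\epsilon$ for elements of $L_c$), writing $\partial_x(b)=\langle x,b_{(1)}\rangle b_{(2)}$, $\Psi^{-1}(b\otimes x)=b_{(1)}\triangleright x\otimes b_{(2)}$, $[x,y]=x_{(1)}ySx_{(2)}$ and $\Psi(x\otimes y)=[x_{(1)},y]\otimes x_{(2)}-[x,y]\otimes1$: \[\partial_{x_a}(b)=\langle ab_{(1)},c\rangle b_{(2)}-\langle a,c\rangle b,\qquad \Psi^{-1}(b\otimes x_a)=x_{ab_{(1)}}\otimes b_{(2)},\] \[[x_a,x_b]=x_{b_{(2)}}\langle a(Sb_{(1)})b_{(3)},c\rangle-x_b\langle a,c\rangle,\qquad \Psi(x_a\otimes x_b)=x_{b_{(2)}}\otimes x_{a(Sb_{(1)})b_{(3)}}.\]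
   Context: $H,A$ are Hopf algebras over $\mathbb{C}$ with invertible antipodes, non-degenerately paired by a Hopf pairing $\langle\ ,\ \rangle$ ($\langle hg,a\rangle=\langle h,a_{(1)}\rangle\langle g,a_{(2)}\rangle$, $\langle h,ab\rangle=\langle h_{(1)},a\rangle\langle h_{(2)},b\rangle$, compatible with units, counits, antipodes); Sweedler notation. $[h,y]:=h_{(1)}ySh_{(2)}$ for $h\in H$. *)

theory Defs
  imports Complex_Main
begin

text \<open>Complex vector spaces are modelled as types of class ring_1 together with an
explicit scalar multiplication s (required to satisfy the vector_space locale).
An element of a tensor product V (x) W is represented by a finite list of pairs
(a formal sum of elementary tensors).  Two such lists denote the same tensor iff
they agree under all pairs of linear functionals (standard characterisation of
equality in V (x) W over a field).\<close>

definition teq :: "(complex \<Rightarrow> 'v::ab_group_add \<Rightarrow> 'v) \<Rightarrow> (complex \<Rightarrow> 'w::ab_group_add \<Rightarrow> 'w)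
   \<Rightarrow> ('v \<times> 'w) list \<Rightarrow> ('v \<times> 'w) list \<Rightarrow> bool" where
  "teq sV sW xs ys \<longleftrightarrow>
     (\<forall>f g. Vector_Spaces.linear sV (*) f \<longrightarrow> Vector_Spaces.linear sW (*) g \<longrightarrow>
        sum_list (map (\<lambda>(x, y). f x * g y) xs) = sum_list (map (\<lambda>(x, y). f x * g y) ys))"

definition teq3 :: "(complex \<Rightarrow> 'u::ab_group_add \<Rightarrow> 'u) \<Rightarrow> (complex \<Rightarrow> 'v::ab_group_add \<Rightarrow> 'v)
   \<Rightarrow> (complex \<Rightarrow> 'w::ab_group_add \<Rightarrow> 'w)
   \<Rightarrow> ('u \<times> 'v \<times> 'w) list \<Rightarrow> ('u \<times> 'v \<times> 'w) list \<Rightarrow> bool" where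
  "teq3 sU sV sW xs ys \<longleftrightarrow>
     (\<forall>f g k. Vector_Spaces.linear sU (*) f \<longrightarrow> Vector_Spaces.linear sV (*) g \<longrightarrow>
        Vector_Spaces.linear sW (*) k \<longrightarrow>
        sum_list (map (\<lambda>(x, y, z). f x * g y * k z) xs) =
        sum_list (map (\<lambda>(x, y, z). f x * g y * k z) ys))"

definition cop2 :: "('h \<Rightarrow> ('h \<times> 'h) list) \<Rightarrow> 'h \<Rightarrow> ('h \<times> 'h \<times> 'h) list" where
  "cop2 \<Delta> x = concat (map (\<lambda>(u, v). map (\<lambda>(v1, v2). (u, v1, v2)) (\<Delta> v)) (\<Delta> x))"

definition cop2' :: "('h \<Rightarrow> ('h \<times> 'h) list) \<Rightarrow> 'h \<Rightarrow> ('h \<times> 'h \<times> 'h) list" where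
  "cop2' \<Delta> x = concat (map (\<lambda>(u, v). map (\<lambda>(u1, u2). (u1, u2, v)) (\<Delta> u)) (\<Delta> x))"

definition hopf_algebra :: "(complex \<Rightarrow> 'h::ring_1 \<Rightarrow> 'h) \<Rightarrow> ('h \<Rightarrow> ('h \<times> 'h) list)
   \<Rightarrow> ('h \<Rightarrow> complex) \<Rightarrow> ('h \<Rightarrow> 'h) \<Rightarrow> bool" where
  "hopf_algebra s \<Delta> \<epsilon> S \<longleftrightarrow>
     vector_space s \<and>
     (\<forall>c x y. s c (x * y) = s c x * y \<and> s c (x * y) = x * s c y) \<and>
     (\<forall>x y. teq s s (\<Delta> (x + y)) (\<Delta> x @ \<Delta> y)) \<and>
     (\<forall>c x. teq s s (\<Delta> (s c x)) (map (\<lambda>(u, v). (s c u, v)) (\<Delta> x))) \<and>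
     (\<forall>x. teq3 s s s (cop2' \<Delta> x) (cop2 \<Delta> x)) \<and>
     Vector_Spaces.linear s (*) \<epsilon> \<and>
     (\<forall>x. sum_list (map (\<lambda>(u, v). s (\<epsilon> u) v) (\<Delta> x)) = x) \<and>
     (\<forall>x. sum_list (map (\<lambda>(u, v). s (\<epsilon> v) u) (\<Delta> x)) = x) \<and>
     (\<forall>x y. teq s s (\<Delta> (x * y))
        (concat (map (\<lambda>(u, v). map (\<lambda>(u', v'). (u * u', v * v')) (\<Delta> y)) (\<Delta> x)))) \<and>
     teq s s (\<Delta> 1) [(1, 1)] \<and>
     (\<forall>x y. \<epsilon> (x * y) = \<epsilon> x * \<epsilon> y) \<and> \<epsilon> 1 = 1 \<and>
     Vector_Spaces.linear s s S \<and>
     (\<forall>x. sum_list (map (\<lambda>(u, v). S u * v) (\<Delta> x)) = s (\<epsilon> x) 1) \<and>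
     (\<forall>x. sum_list (map (\<lambda>(u, v). u * S v) (\<Delta> x)) = s (\<epsilon> x) 1) \<and>
     bij S"

definition hopf_pairing :: "(complex \<Rightarrow> 'h::ring_1 \<Rightarrow> 'h) \<Rightarrow> ('h \<Rightarrow> ('h \<times> 'h) list)
   \<Rightarrow> ('h \<Rightarrow> complex) \<Rightarrow> ('h \<Rightarrow> 'h)
   \<Rightarrow> (complex \<Rightarrow> 'a::ring_1 \<Rightarrow> 'a) \<Rightarrow> ('a \<Rightarrow> ('a \<times> 'a) list)
   \<Rightarrow> ('a \<Rightarrow> complex) \<Rightarrow> ('a \<Rightarrow> 'a) \<Rightarrow> ('h \<Rightarrow> 'a \<Rightarrow> complex) \<Rightarrow> bool" where
  "hopf_pairing sH \<Delta>H \<epsilon>H SH sA \<Delta>A \<epsilon>A SA pr \<longleftrightarrow>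
     hopf_algebra sH \<Delta>H \<epsilon>H SH \<and> hopf_algebra sA \<Delta>A \<epsilon>A SA \<and>
     (\<forall>a. Vector_Spaces.linear sH (*) (\<lambda>h. pr h a)) \<and>
     (\<forall>h. Vector_Spaces.linear sA (*) (\<lambda>a. pr h a)) \<and>
     (\<forall>h g a. pr (h * g) a = sum_list (map (\<lambda>(a1, a2). pr h a1 * pr g a2) (\<Delta>A a))) \<and>
     (\<forall>h a b. pr h (a * b) = sum_list (map (\<lambda>(h1, h2). pr h1 a * pr h2 b) (\<Delta>H h))) \<and>
     (\<forall>a. pr 1 a = \<epsilon>A a) \<and> (\<forall>h. pr h 1 = \<epsilon>H h) \<and>
     (\<forall>h a. pr (SH h) a = pr h (SA a)) \<and>
     (\<forall>h. (\<forall>a. pr h a = 0) \<longrightarrow> h = 0) \<and>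
     (\<forall>a. (\<forall>h. pr h a = 0) \<longrightarrow> a = 0)"

definition xel :: "(complex \<Rightarrow> 'h::ring_1 \<Rightarrow> 'h) \<Rightarrow> ('h \<Rightarrow> ('h \<times> 'h) list)
   \<Rightarrow> ('h \<Rightarrow> 'a \<Rightarrow> complex) \<Rightarrow> 'h \<Rightarrow> 'a \<Rightarrow> 'h" where
  "xel sH \<Delta>H pr c a = sum_list (map (\<lambda>(c1, c2). sH (pr c1 a) c2) (\<Delta>H c)) - sH (pr c a) 1"

text \<open>Quantum double action: h |> x = h1 x S h2 (this is also [h,x]),
  a |> x = <a,x1> x2 - <a,x> 1.\<close>
definition actH :: "('h::ring_1 \<Rightarrow> ('h \<times> 'h) list) \<Rightarrow> ('h \<Rightarrow> 'h) \<Rightarrow> 'h \<Rightarrow> 'h \<Rightarrow> 'h" where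
  "actH \<Delta>H SH h x = sum_list (map (\<lambda>(h1, h2). h1 * x * SH h2) (\<Delta>H h))"

definition actA :: "(complex \<Rightarrow> 'h::ring_1 \<Rightarrow> 'h) \<Rightarrow> ('h \<Rightarrow> ('h \<times> 'h) list)
   \<Rightarrow> ('h \<Rightarrow> 'a \<Rightarrow> complex) \<Rightarrow> 'a \<Rightarrow> 'h \<Rightarrow> 'h" where
  "actA sH \<Delta>H pr a x = sum_list (map (\<lambda>(x1, x2). sH (pr x1 a) x2) (\<Delta>H x)) - sH (pr x a) 1"

definition qd_stable :: "(complex \<Rightarrow> 'h::ring_1 \<Rightarrow> 'h) \<Rightarrow> ('h \<Rightarrow> ('h \<times> 'h) list)
   \<Rightarrow> ('h \<Rightarrow> 'h) \<Rightarrow> ('h \<Rightarrow> 'a \<Rightarrow> complex) \<Rightarrow> 'h set \<Rightarrow> bool" where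
  "qd_stable sH \<Delta>H SH pr L \<longleftrightarrow>
     (\<forall>h x. x \<in> L \<longrightarrow> actH \<Delta>H SH h x \<in> L) \<and>
     (\<forall>a x. x \<in> L \<longrightarrow> actA sH \<Delta>H pr a x \<in> L)"

definition dpart :: "(complex \<Rightarrow> 'a::ring_1 \<Rightarrow> 'a) \<Rightarrow> ('a \<Rightarrow> ('a \<times> 'a) list)
   \<Rightarrow> ('h \<Rightarrow> 'a \<Rightarrow> complex) \<Rightarrow> 'h \<Rightarrow> 'a \<Rightarrow> 'a" where
  "dpart sA \<Delta>A pr x b = sum_list (map (\<lambda>(b1, b2). sA (pr x b1) b2) (\<Delta>A b))"

definition psi_inv :: "(complex \<Rightarrow> 'h::ring_1 \<Rightarrow> 'h) \<Rightarrow> ('h \<Rightarrow> ('h \<times> 'h) list)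
   \<Rightarrow> ('a \<Rightarrow> ('a \<times> 'a) list) \<Rightarrow> ('h \<Rightarrow> 'a \<Rightarrow> complex) \<Rightarrow> 'a \<Rightarrow> 'h \<Rightarrow> ('h \<times> 'a) list" where
  "psi_inv sH \<Delta>H \<Delta>A pr b x = map (\<lambda>(b1, b2). (actA sH \<Delta>H pr b1 x, b2)) (\<Delta>A b)"

definition psi :: "('h::ring_1 \<Rightarrow> ('h \<times> 'h) list) \<Rightarrow> ('h \<Rightarrow> 'h) \<Rightarrow> 'h \<Rightarrow> 'h \<Rightarrow> ('h \<times> 'h) list" where
  "psi \<Delta>H SH x y = map (\<lambda>(x1, x2). (actH \<Delta>H SH x1 y, x2)) (\<Delta>H x) @ [(- actH \<Delta>H SH x y, 1)]"

end

theory Submission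
  imports Defs
begin

text \<open>By non-degeneracy an element of \<open>H\<close> is determined by its pairings with \<open>A\<close>, and
  \<open>\<langle>x\<^sub>a, e\<rangle> = \<langle>c, a e\<rangle> - \<langle>c, a\<rangle> \<epsilon>(e)\<close>.  Hence \<open>a \<mapsto> x\<^sub>a\<close> is linear, \<open>d \<triangleright> x\<^sub>a = x\<^bsub>a d\<^esub>\<close>, and
  \<open>k \<triangleright> x\<^sub>b = x\<^bsub>k \<triangleright> b\<^esub>\<close> for the coadjoint action \<open>k \<triangleright> b = \<langle>k, S b\<^sub>1 b\<^sub>3\<rangle> b\<^sub>2\<close> of \<open>H\<close> on \<open>A\<close>.
  The last identity is where centrality enters, in the form \<open>\<langle>c, w\<^sub>1\<rangle> w\<^sub>2 = \<langle>c, w\<^sub>2\<rangle> w\<^sub>1\<close>.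
  Both actions preserve \<open>ker \<epsilon>\<close>, which gives the stability of both spans, and the four
  formulas follow by substituting these identities.\<close>

definition sum2 :: "('x \<times> 'y) list \<Rightarrow> ('x \<Rightarrow> 'y \<Rightarrow> 'b::comm_monoid_add) \<Rightarrow> 'b" where
  "sum2 L F = sum_list (map (\<lambda>(u, v). F u v) L)"

definition sum3 :: "('x \<times> 'y \<times> 'z) list \<Rightarrow> ('x \<Rightarrow> 'y \<Rightarrow> 'z \<Rightarrow> 'b::comm_monoid_add) \<Rightarrow> 'b" where
  "sum3 L F = sum_list (map (\<lambda>(u, v, w). F u v w) L)"

lemma sum2_Nil [simp]: "sum2 [] F = 0"
  and sum2_Cons [simp]: "sum2 ((u, v) # L) F = F u v + sum2 L F"
  by (simp_all add: sum2_def)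

lemma sum3_Nil [simp]: "sum3 [] F = 0"
  and sum3_Cons [simp]: "sum3 ((u, v, w) # L) F = F u v w + sum3 L F"
  by (simp_all add: sum3_def)

lemma sum2_zero [simp]: "sum2 L (\<lambda>u v. 0) = 0"
  by (induction L) auto

lemma sum2_add: "sum2 L (\<lambda>u v. F u v + G u v) = sum2 L F + sum2 L G"
  by (induction L) (auto simp: add_ac)

lemma sum2_diff: "sum2 L (\<lambda>u v. (F u v :: 'b::ab_group_add) - G u v) = sum2 L F - sum2 L G"
  by (induction L) (auto simp: algebra_simps)

lemma sum3_diff: "sum3 L (\<lambda>u v w. (F u v w :: 'b::ab_group_add) - G u v w) = sum3 L F - sum3 L G"
  by (induction L) (auto simp: algebra_simps)

lemma sum2_cong: "(\<And>u v. (u, v) \<in> set L \<Longrightarrow> F u v = G u v) \<Longrightarrow> sum2 L F = sum2 L G"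
  by (induction L) auto

lemma sum3_cong: "(\<And>u v w. (u, v, w) \<in> set L \<Longrightarrow> F u v w = G u v w) \<Longrightarrow> sum3 L F = sum3 L G"
  by (induction L) auto

lemma sum2_swap: "sum2 L (\<lambda>u v. sum2 M (G u v)) = sum2 M (\<lambda>x y. sum2 L (\<lambda>u v. G u v x y))"
  by (induction L) (auto simp: sum2_add)

lemma sum3_sum2_swap: "sum3 L (\<lambda>u v w. sum2 M (G u v w)) = sum2 M (\<lambda>x y. sum3 L (\<lambda>u v w. G u v w x y))"
  by (induction L) (auto simp: sum2_add)

lemma sum2_mult_left: "(t::'b::semiring_0) * sum2 L F = sum2 L (\<lambda>u v. t * F u v)"
  by (induction L) (auto simp: algebra_simps)

lemma sum2_mult_right: "sum2 L F * (t::'b::semiring_0) = sum2 L (\<lambda>u v. F u v * t)"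
  by (induction L) (auto simp: algebra_simps)

lemma sum3_mult_left: "(t::'b::semiring_0) * sum3 L F = sum3 L (\<lambda>u v w. t * F u v w)"
  by (induction L) (auto simp: algebra_simps)

lemma sum3_mult_right: "sum3 L F * (t::'b::semiring_0) = sum3 L (\<lambda>u v w. F u v w * t)"
  by (induction L) (auto simp: algebra_simps)

lemma additive_sum2:
  assumes "\<And>x y. f (x + y) = f x + f y" and "f 0 = 0"
  shows "f (sum2 L F) = sum2 L (\<lambda>u v. f (F u v))"
  by (induction L) (auto simp: assms)

lemma additive_sum3:
  assumes "\<And>x y. f (x + y) = f x + f y" and "f 0 = 0"
  shows "f (sum3 L F) = sum3 L (\<lambda>u v w. f (F u v w))"
  by (induction L) (auto simp: assms)

lemma linear_sum2: "Vector_Spaces.linear s1 s2 f \<Longrightarrow> f (sum2 L F) = sum2 L (\<lambda>u v. f (F u v))"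
  by (rule additive_sum2) (simp_all add: module_hom.add module_hom.zero linear_iff_module_hom)

lemma linear_sum3: "Vector_Spaces.linear s1 s2 f \<Longrightarrow> f (sum3 L F) = sum3 L (\<lambda>u v w. f (F u v w))"
  by (rule additive_sum3) (simp_all add: module_hom.add module_hom.zero linear_iff_module_hom)

lemma sum2_map_pair: "sum2 (map (\<lambda>(u, v). (G u v, K u v)) L) F = sum2 L (\<lambda>u v. F (G u v) (K u v))"
  by (induction L) auto

lemma sum2_map_triple: "sum2 (map (\<lambda>(u, v, w). (G u v w, K u v w)) L) F = sum3 L (\<lambda>u v w. F (G u v w) (K u v w))"
  by (induction L) auto

lemma sum2_append: "sum2 (L @ M) F = sum2 L F + sum2 M F"
  by (simp add: sum2_def)

lemma sum2_concat_map:
  "sum2 (concat (map (\<lambda>(u, v). map (\<lambda>(u', v'). (P u u', Q v v')) M) L)) F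
     = sum2 L (\<lambda>u v. sum2 M (\<lambda>u' v'. F (P u u') (Q v v')))"
  by (induction L) (auto simp: sum2_append sum2_map_pair)

lemma sum3_append: "sum3 (L @ M) F = sum3 L F + sum3 M F"
  by (simp add: sum3_def)

lemma sum3_cop2: "sum3 (cop2 D x) F = sum2 (D x) (\<lambda>u v. sum2 (D v) (\<lambda>v1 v2. F u v1 v2))"
proof -
  have inner: "sum3 (map (Pair u) M) F = sum2 M (F u)" for u M
    by (induction M) auto
  have "sum3 (concat (map (\<lambda>(u, v). map (\<lambda>(v1, v2). (u, v1, v2)) (D v)) L)) F
      = sum2 L (\<lambda>u v. sum2 (D v) (\<lambda>v1 v2. F u v1 v2))" for L
    by (induction L) (auto simp: sum3_append inner)
  then show ?thesis by (simp add: cop2_def)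
qed

lemma sum3_cop2': "sum3 (cop2' D x) F = sum2 (D x) (\<lambda>u v. sum2 (D u) (\<lambda>u1 u2. F u1 u2 v))"
proof -
  have inner: "sum3 (map (\<lambda>(u1, u2). (u1, u2, v)) M) F = sum2 M (\<lambda>u1 u2. F u1 u2 v)" for v M
    by (induction M) auto
  have "sum3 (concat (map (\<lambda>(u, v). map (\<lambda>(u1, u2). (u1, u2, v)) (D u)) L)) F
      = sum2 L (\<lambda>u v. sum2 (D u) (\<lambda>u1 u2. F u1 u2 v))" for L
    by (induction L) (auto simp: sum3_append inner)
  then show ?thesis by (simp add: cop2'_def)
qed

lemma vector_space_complex: "vector_space ((*) :: complex \<Rightarrow> complex \<Rightarrow> complex)"
  by unfold_locales (auto simp: algebra_simps)

locale paired_hopf_algebras =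
  fixes sH :: "complex \<Rightarrow> 'h::ring_1 \<Rightarrow> 'h" and DH :: "'h \<Rightarrow> ('h \<times> 'h) list"
    and eH :: "'h \<Rightarrow> complex" and SH :: "'h \<Rightarrow> 'h"
    and sA :: "complex \<Rightarrow> 'a::ring_1 \<Rightarrow> 'a" and DA :: "'a \<Rightarrow> ('a \<times> 'a) list"
    and eA :: "'a \<Rightarrow> complex" and SA :: "'a \<Rightarrow> 'a"
    and pr :: "'h \<Rightarrow> 'a \<Rightarrow> complex"
  assumes hopf_pairing: "hopf_pairing sH DH eH SH sA DA eA SA pr"
begin

lemma hopf_algebra_H: "hopf_algebra sH DH eH SH"
  using hopf_pairing by (simp add: hopf_pairing_def)

lemma hopf_algebra_A: "hopf_algebra sA DA eA SA"
  using hopf_pairing by (simp add: hopf_pairing_def)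

sublocale vH: vector_space sH
  using hopf_algebra_H by (simp add: hopf_algebra_def)

sublocale vA: vector_space sA
  using hopf_algebra_A by (simp add: hopf_algebra_def)

lemma scale_mult_left_H: "sH t (x * y) = sH t x * y"
  and scale_mult_right_H: "sH t (x * y) = x * sH t y"
  using hopf_algebra_H unfolding hopf_algebra_def by blast+

lemma scale_mult_left_A: "sA t (x * y) = sA t x * y"
  and scale_mult_right_A: "sA t (x * y) = x * sA t y"
  using hopf_algebra_A unfolding hopf_algebra_def by blast+

lemma linear_pr_left: "Vector_Spaces.linear sH (*) (\<lambda>h. pr h a)"
  and linear_pr_right: "Vector_Spaces.linear sA (*) (pr h)"
  using hopf_pairing unfolding hopf_pairing_def by blast+

lemma pr_add_left [simp]: "pr (h + g) a = pr h a + pr g a"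
  and pr_scale_left [simp]: "pr (sH t h) a = t * pr h a"
  using linear_pr_left[of a] by (simp_all add: Vector_Spaces.linear_iff)

lemma pr_add_right [simp]: "pr h (a + b) = pr h a + pr h b"
  and pr_scale_right [simp]: "pr h (sA t a) = t * pr h a"
  using linear_pr_right[of h] by (simp_all add: Vector_Spaces.linear_iff)

lemma pr_diff_left [simp]: "pr (h - g) a = pr h a - pr g a"
  using pr_add_left[of h "- g" a] pr_scale_left[of "- 1" g a] by simp

lemma pr_diff_right [simp]: "pr h (a - b) = pr h a - pr h b"
  using pr_add_right[of h a "- b"] pr_scale_right[of h "- 1" b] by simp

lemma pr_mult_left: "pr (h * g) a = sum2 (DA a) (\<lambda>a1 a2. pr h a1 * pr g a2)"
  using hopf_pairing by (simp add: hopf_pairing_def sum2_def)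

lemma pr_mult_right: "pr h (a * b) = sum2 (DH h) (\<lambda>h1 h2. pr h1 a * pr h2 b)"
  using hopf_pairing by (simp add: hopf_pairing_def sum2_def)

lemma pr_one_left [simp]: "pr 1 a = eA a"
  and pr_one_right [simp]: "pr h 1 = eH h"
  and pr_antipode: "pr (SH h) a = pr h (SA a)"
  using hopf_pairing by (simp_all add: hopf_pairing_def)

lemma H_eqI: assumes "\<And>a. pr h a = pr g a" shows "h = g"
proof -
  have "\<forall>a. pr (h - g) a = 0"
    using assms by simp
  then show ?thesis
    using hopf_pairing unfolding hopf_pairing_def by (metis eq_iff_diff_eq_0)
qed

lemma A_eqI: assumes "\<And>h. pr h a = pr h b" shows "a = b"
proof -
  have "\<forall>h. pr h (a - b) = 0"
    using assms by simp
  then show ?thesis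
    using hopf_pairing unfolding hopf_pairing_def by (metis eq_iff_diff_eq_0)
qed

lemma linear_counit_A: "Vector_Spaces.linear sA (*) eA"
  using hopf_algebra_A by (simp add: hopf_algebra_def)

lemma eA_scale [simp]: "eA (sA t x) = t * eA x"
  using linear_counit_A by (simp add: Vector_Spaces.linear_iff)

lemma eA_mult: "eA (x * y) = eA x * eA y"
  and eA_one [simp]: "eA 1 = 1"
  using hopf_algebra_A by (simp_all add: hopf_algebra_def)

lemma counit_A_left: "sum2 (DA x) (\<lambda>u v. sA (eA u) v) = x"
  and counit_A_right: "sum2 (DA x) (\<lambda>u v. sA (eA v) u) = x"
  and antipode_A_left: "sum2 (DA x) (\<lambda>u v. SA u * v) = sA (eA x) 1"
  and antipode_A_right: "sum2 (DA x) (\<lambda>u v. u * SA v) = sA (eA x) 1"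
  using hopf_algebra_A by (simp_all add: hopf_algebra_def sum2_def)

lemma antipode_H_left: "sum2 (DH x) (\<lambda>u v. SH u * v) = sH (eH x) 1"
  using hopf_algebra_H by (simp add: hopf_algebra_def sum2_def)

lemma linear_antipode_A: "Vector_Spaces.linear sA sA SA"
  using hopf_algebra_A by (simp add: hopf_algebra_def)

lemma SA_add [simp]: "SA (x + y) = SA x + SA y"
  and SA_scale [simp]: "SA (sA t x) = sA t (SA x)"
  using linear_antipode_A by (simp_all add: Vector_Spaces.linear_iff)

lemma counit_antipode_A [simp]: "eA (SA x) = eA x"
proof -
  have "eA (SA x) = eA (SA (sum2 (DA x) (\<lambda>u v. sA (eA v) u)))"
    by (simp add: counit_A_right)
  also have "\<dots> = eA (sum2 (DA x) (\<lambda>u v. SA u * v))"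
    by (simp add: linear_sum2[OF linear_antipode_A] linear_sum2[OF linear_counit_A]
        eA_mult mult.commute)
  also have "\<dots> = eA x"
    by (simp add: antipode_A_left)
  finally show ?thesis .
qed

lemma coassoc_A:
  assumes "Vector_Spaces.linear sA (*) f" "Vector_Spaces.linear sA (*) g" "Vector_Spaces.linear sA (*) k"
  shows "sum3 (cop2' DA x) (\<lambda>u v w. f u * g v * k w) = sum3 (cop2 DA x) (\<lambda>u v w. f u * g v * k w)"
  using hopf_algebra_A assms unfolding hopf_algebra_def teq3_def sum3_def by blast

lemma comult_mult_A:
  assumes f: "Vector_Spaces.linear sA (*) f" and g: "Vector_Spaces.linear sA (*) g"
  shows "sum2 (DA (x * y)) (\<lambda>u v. f u * g v)
       = sum2 (DA x) (\<lambda>u v. sum2 (DA y) (\<lambda>u' v'. f (u * u') * g (v * v')))"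
proof -
  let ?P = "concat (map (\<lambda>(u, v). map (\<lambda>(u', v'). (u * u', v * v')) (DA y)) (DA x))"
  have "teq sA sA (DA (x * y)) ?P"
    using hopf_algebra_A by (simp add: hopf_algebra_def)
  then have "sum2 (DA (x * y)) (\<lambda>u v. f u * g v) = sum2 ?P (\<lambda>u v. f u * g v)"
    using f g unfolding teq_def sum2_def by blast
  also have "\<dots> = sum2 (DA x) (\<lambda>u v. sum2 (DA y) (\<lambda>u' v'. f (u * u') * g (v * v')))"
    by (rule sum2_concat_map)
  finally show ?thesis .
qed

lemma linear_functional_AI:
  "(\<And>x y. f (x + y) = f x + f y) \<Longrightarrow> (\<And>t x. f (sA t x) = t * f x)
   \<Longrightarrow> Vector_Spaces.linear sA (*) f"
  by (simp add: Vector_Spaces.linear_iff vector_space_complex vA.vector_space_axioms)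

lemma linear_pr_sandwich: "Vector_Spaces.linear sA (*) (\<lambda>z. pr k (Z * z * W))"
  by (rule linear_functional_AI) (simp_all add: distrib_left distrib_right
      flip: scale_mult_left_A scale_mult_right_A)

lemma linear_pr_antipode: "Vector_Spaces.linear sA (*) (\<lambda>z. pr k (SA z))"
  by (rule linear_functional_AI) simp_all

lemma linear_pr_mult_left: "Vector_Spaces.linear sA (*) (\<lambda>z. pr k (y * z))"
  and linear_pr_mult_right: "Vector_Spaces.linear sA (*) (\<lambda>z. pr k (z * y))"
  using linear_pr_sandwich[of k y 1] linear_pr_sandwich[of k 1 y] by simp_all

lemma sum3_cop2_pr: "sum3 (cop2 DA x) (\<lambda>u v w. pr h u * pr g v * pr l w) = pr (h * (g * l)) x"
  by (simp add: sum3_cop2 pr_mult_left sum2_mult_left mult.assoc)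

lemma sum3_cop2'_pr: "sum3 (cop2' DA x) (\<lambda>u v w. pr h u * pr g v * pr l w) = pr (h * g * l) x"
  by (simp add: sum3_cop2' pr_mult_left sum2_mult_right)

text \<open>Coassociativity is only available against products of three functionals; a factor
  \<open>\<langle>k, y z\<rangle>\<close> is split into such a product by the coproduct of \<open>k\<close>.\<close>

lemma coassoc_A_pr_right:
  assumes f: "Vector_Spaces.linear sA (*) f"
  shows "sum3 (cop2 DA x) (\<lambda>u v w. f u * pr k (Z * v * SA w))
       = sum3 (cop2' DA x) (\<lambda>u v w. f u * pr k (Z * v * SA w))"
proof -
  have split: "f u * pr k (Z * v * SA w)
      = sum2 (DH k) (\<lambda>k1 k2. f u * pr k1 (Z * v) * pr k2 (SA w))" for u v w
    using pr_mult_right[of k "Z * v" "SA w"] by (simp add: sum2_mult_left mult.assoc)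
  show ?thesis
    unfolding split sum3_sum2_swap
    by (rule sum2_cong) (rule coassoc_A[OF f linear_pr_mult_left linear_pr_antipode, symmetric])
qed

lemma coassoc_A_pr_left:
  assumes f: "Vector_Spaces.linear sA (*) f"
  shows "sum3 (cop2 DA x) (\<lambda>u v w. pr k (SA u * v * Z) * f w)
       = sum3 (cop2' DA x) (\<lambda>u v w. pr k (SA u * v * Z) * f w)"
proof -
  have split: "pr k (SA u * v * Z) * f w
      = sum2 (DH k) (\<lambda>k1 k2. pr k1 (SA u) * pr k2 (v * Z) * f w)" for u v w
    using pr_mult_right[of k "SA u" "v * Z"] by (simp add: sum2_mult_right mult.assoc)
  show ?thesis
    unfolding split sum3_sum2_swap
    by (rule sum2_cong) (rule coassoc_A[OF linear_pr_antipode linear_pr_mult_right f, symmetric])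
qed

lemma sum3_cop2_antipode_right:
  assumes f: "Vector_Spaces.linear sA (*) f"
  shows "sum3 (cop2 DA e) (\<lambda>e1 e2 e3. f e1 * pr k (Z * e2 * SA e3)) = f e * pr k Z"
proof -
  have inner: "sum2 (DA r) (\<lambda>e2 e3. pr k (Z * e2 * SA e3)) = eA r * pr k Z" for r
  proof -
    have "sum2 (DA r) (\<lambda>e2 e3. pr k (Z * e2 * SA e3)) = pr k (Z * sum2 (DA r) (\<lambda>e2 e3. e2 * SA e3))"
      by (simp add: linear_sum2[OF linear_pr_right] sum2_mult_left mult.assoc)
    then show ?thesis
      by (simp add: antipode_A_right flip: scale_mult_right_A)
  qed
  have scale: "f (sA t x) = t * f x" for t x
    using f by (simp add: Vector_Spaces.linear_iff)
  have "sum3 (cop2 DA e) (\<lambda>e1 e2 e3. f e1 * pr k (Z * e2 * SA e3))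
      = sum2 (DA e) (\<lambda>e1 r. f e1 * sum2 (DA r) (\<lambda>e2 e3. pr k (Z * e2 * SA e3)))"
    by (simp add: sum3_cop2 sum2_mult_left)
  also have "\<dots> = sum2 (DA e) (\<lambda>e1 r. f (sA (eA r) e1)) * pr k Z"
    by (simp only: inner) (simp add: scale sum2_mult_left sum2_mult_right mult_ac)
  also have "\<dots> = f e * pr k Z"
    by (simp add: linear_sum2[OF f, symmetric] counit_A_right)
  finally show ?thesis .
qed

lemma sum3_cop2'_antipode_left:
  assumes f: "Vector_Spaces.linear sA (*) f"
  shows "sum3 (cop2' DA b) (\<lambda>b1 b2 b3. pr k (SA b1 * b2 * Z) * f b3) = pr k Z * f b"
proof -
  have inner: "sum2 (DA r) (\<lambda>b1 b2. pr k (SA b1 * b2 * Z)) = eA r * pr k Z" for r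
  proof -
    have "sum2 (DA r) (\<lambda>b1 b2. pr k (SA b1 * b2 * Z)) = pr k (sum2 (DA r) (\<lambda>b1 b2. SA b1 * b2) * Z)"
      by (simp add: linear_sum2[OF linear_pr_right] sum2_mult_right)
    then show ?thesis
      by (simp add: antipode_A_left flip: scale_mult_left_A)
  qed
  have scale: "f (sA t x) = t * f x" for t x
    using f by (simp add: Vector_Spaces.linear_iff)
  have "sum3 (cop2' DA b) (\<lambda>b1 b2 b3. pr k (SA b1 * b2 * Z) * f b3)
      = sum2 (DA b) (\<lambda>r b3. sum2 (DA r) (\<lambda>b1 b2. pr k (SA b1 * b2 * Z)) * f b3)"
    by (simp add: sum3_cop2' sum2_mult_right)
  also have "\<dots> = pr k Z * sum2 (DA b) (\<lambda>r b3. f (sA (eA r) b3))"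
    by (simp only: inner) (simp add: scale sum2_mult_left sum2_mult_right mult_ac)
  also have "\<dots> = pr k Z * f b"
    by (simp add: linear_sum2[OF f, symmetric] counit_A_left)
  finally show ?thesis .
qed

lemma sum3_cop2'_counit_middle:
  "sum3 (cop2' DA e) (\<lambda>e1 e2 e3. pr k (e1 * SA e3) * eA e2) = eA e * eH k"
proof -
  have inner: "sum2 (DA p) (\<lambda>e1 e2. pr k (e1 * SA e3) * eA e2) = pr k (p * SA e3)" for p e3
  proof -
    have "sum2 (DA p) (\<lambda>e1 e2. pr k (e1 * SA e3) * eA e2)
        = pr k (sum2 (DA p) (\<lambda>e1 e2. sA (eA e2) e1) * SA e3)"
      by (simp add: linear_sum2[OF linear_pr_right] sum2_mult_right mult.commute
          flip: scale_mult_left_A)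
    then show ?thesis
      by (simp add: counit_A_right)
  qed
  have "sum3 (cop2' DA e) (\<lambda>e1 e2 e3. pr k (e1 * SA e3) * eA e2)
      = pr k (sum2 (DA e) (\<lambda>p e3. p * SA e3))"
    by (simp add: sum3_cop2' inner linear_sum2[OF linear_pr_right])
  then show ?thesis
    by (simp add: antipode_A_right)
qed

definition coad :: "'h \<Rightarrow> 'a \<Rightarrow> 'a" where
  "coad k b = sum3 (cop2 DA b) (\<lambda>b1 b2 b3. sA (pr k (SA b1 * b3)) b2)"

lemma eA_coad: "eA (coad k b) = eH k * eA b"
proof -
  have inner: "sum2 (DA q) (\<lambda>b2 b3. pr k (SA b1 * b3) * eA b2) = pr k (SA b1 * q)" for b1 q
  proof -
    have "sum2 (DA q) (\<lambda>b2 b3. pr k (SA b1 * b3) * eA b2)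
        = pr k (SA b1 * sum2 (DA q) (\<lambda>b2 b3. sA (eA b2) b3))"
      by (simp add: linear_sum2[OF linear_pr_right] sum2_mult_left mult.commute
          flip: scale_mult_right_A)
    then show ?thesis
      by (simp add: counit_A_left)
  qed
  have "eA (coad k b) = pr k (sum2 (DA b) (\<lambda>b1 q. SA b1 * q))"
    by (simp add: coad_def sum3_cop2 linear_sum2[OF linear_counit_A] inner
        linear_sum2[OF linear_pr_right])
  also have "\<dots> = eH k * eA b"
    by (simp add: antipode_A_left)
  finally show ?thesis .
qed

lemma coad_one: "coad 1 b = b"
proof -
  have inner: "sum2 (DA q) (\<lambda>b2 b3. sA (eA (SA b1 * b3)) b2) = sA (eA b1) q" for b1 q
  proof -
    have "sum2 (DA q) (\<lambda>b2 b3. sA (eA (SA b1 * b3)) b2)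
        = sA (eA b1) (sum2 (DA q) (\<lambda>b2 b3. sA (eA b3) b2))"
      by (simp add: eA_mult linear_sum2[OF vA.linear_scale_self] flip: vA.scale_scale)
    then show ?thesis
      by (simp add: counit_A_right)
  qed
  show ?thesis
    by (simp add: coad_def sum3_cop2 inner counit_A_left)
qed

lemma actA_sum2: "actA sH DH pr d x = sum2 (DH x) (\<lambda>x1 x2. sH (pr x1 d) x2) - sH (pr x d) 1"
  by (simp add: actA_def sum2_def)

lemma actH_sum2: "actH DH SH k x = sum2 (DH k) (\<lambda>k1 k2. k1 * x * SH k2)"
  by (simp add: actH_def sum2_def)

lemma pr_actA: "pr (actA sH DH pr d x) e = pr x (d * e) - pr x d * eA e"
  by (simp add: actA_sum2 linear_sum2[OF linear_pr_left] pr_mult_right)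

lemma actA_add: "actA sH DH pr d (x + y) = actA sH DH pr d x + actA sH DH pr d y"
  and actA_scale: "actA sH DH pr d (sH t x) = sH t (actA sH DH pr d x)"
  by (auto intro: H_eqI simp: pr_actA algebra_simps)

lemma actH_add: "actH DH SH k (x + y) = actH DH SH k x + actH DH SH k y"
  by (simp add: actH_sum2 distrib_left distrib_right flip: sum2_add)

lemma actH_scale: "actH DH SH k (sH t x) = sH t (actH DH SH k x)"
  by (simp add: actH_sum2 linear_sum2[OF vH.linear_scale_self]
      flip: scale_mult_left_H scale_mult_right_H)

lemma span_closed_H:
  assumes x: "x \<in> vH.span X"
    and add: "\<And>x y. T (x + y) = T x + T y" and scale: "\<And>t x. T (sH t x) = sH t (T x)"
    and base: "\<And>x. x \<in> X \<Longrightarrow> T x \<in> vH.span X"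
  shows "T x \<in> vH.span X"
  using x
proof (induction rule: vH.span_induct_alt)
  case base
  have "T 0 = 0"
    using scale[of 0 0] by simp
  then show ?case
    by (simp add: vH.span_zero)
next
  case (step t x y)
  then show ?case
    by (simp add: add scale base vH.span_add vH.span_scale)
qed

end

locale central_element = paired_hopf_algebras sH DH eH SH sA DA eA SA pr
  for sH :: "complex \<Rightarrow> 'h::ring_1 \<Rightarrow> 'h" and DH eH SH
    and sA :: "complex \<Rightarrow> 'a::ring_1 \<Rightarrow> 'a" and DA eA SA pr +
  fixes c :: 'h
  assumes central: "\<forall>h. c * h = h * c"
begin

abbreviation X :: "'a \<Rightarrow> 'h" where
  "X \<equiv> xel sH DH pr c"

lemma pr_xel: "pr (X a) e = pr c (a * e) - pr c a * eA e"
proof -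
  have "X a = sum2 (DH c) (\<lambda>c1 c2. sH (pr c1 a) c2) - sH (pr c a) 1"
    by (simp add: xel_def sum2_def)
  then show ?thesis
    by (simp add: linear_sum2[OF linear_pr_left] pr_mult_right)
qed

lemma xel_add: "X (a + b) = X a + X b"
  by (rule H_eqI) (simp add: pr_xel algebra_simps)

lemma xel_scale: "X (sA t a) = sH t (X a)"
  by (rule H_eqI) (simp add: pr_xel algebra_simps flip: scale_mult_left_A)

lemma linear_xel: "Vector_Spaces.linear sA sH X"
  by (simp add: Vector_Spaces.linear_iff xel_add xel_scale vA.vector_space_axioms
      vH.vector_space_axioms)

lemma actA_xel: "actA sH DH pr d (X a) = X (a * d)"
  by (rule H_eqI) (simp add: pr_actA pr_xel eA_mult algebra_simps)

lemma comult_pr_c_swap: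
  "sum2 (DA w) (\<lambda>w1 w2. sA (pr c w1) w2) = sum2 (DA w) (\<lambda>w1 w2. sA (pr c w2) w1)"
proof (rule A_eqI)
  fix h
  have "pr h (sum2 (DA w) (\<lambda>w1 w2. sA (pr c w1) w2)) = pr (c * h) w"
    by (simp add: linear_sum2[OF linear_pr_right] pr_mult_left)
  also have "\<dots> = pr (h * c) w"
    using central by simp
  also have "\<dots> = pr h (sum2 (DA w) (\<lambda>w1 w2. sA (pr c w2) w1))"
    by (simp add: linear_sum2[OF linear_pr_right] pr_mult_left mult.commute)
  finally show "pr h (sum2 (DA w) (\<lambda>w1 w2. sA (pr c w1) w2))
      = pr h (sum2 (DA w) (\<lambda>w1 w2. sA (pr c w2) w1))" .
qed

lemma comult_pr_c_swap_linear:
  assumes g: "Vector_Spaces.linear sA (*) g"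
  shows "sum2 (DA w) (\<lambda>w1 w2. pr c w1 * g w2) = sum2 (DA w) (\<lambda>w1 w2. g w1 * pr c w2)"
  using arg_cong[OF comult_pr_c_swap, of g] g
  by (simp add: linear_sum2[OF g] Vector_Spaces.linear_iff mult.commute)

lemma comult_mult_pr_c_swap:
  "sum2 (DA q) (\<lambda>b2 b3. sum2 (DA p) (\<lambda>e1 e2. pr c (b2 * e1) * pr k (Z * b3 * e2 * W)))
 = sum2 (DA q) (\<lambda>b2 b3. sum2 (DA p) (\<lambda>e1 e2. pr k (Z * b2 * e1 * W) * pr c (b3 * e2)))"
proof -
  have "sum2 (DA (q * p)) (\<lambda>w1 w2. pr c w1 * pr k (Z * w2 * W))
      = sum2 (DA (q * p)) (\<lambda>w1 w2. pr k (Z * w1 * W) * pr c w2)"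
    by (rule comult_pr_c_swap_linear[OF linear_pr_sandwich])
  then show ?thesis
    by (simp only: comult_mult_A[OF linear_pr_right linear_pr_sandwich]
        comult_mult_A[OF linear_pr_sandwich linear_pr_right]) (simp add: mult.assoc)
qed

lemma pr_c_coad: "pr c (coad k b) = eH k * pr c b"
proof -
  have split: "pr k (SA b1 * b3) * pr c b2 = sum2 (DH k) (\<lambda>k1 k2. pr (SH k1) b1 * pr c b2 * pr k2 b3)"
    for b1 b2 b3
    by (simp add: pr_mult_right pr_antipode sum2_mult_left sum2_mult_right mult_ac)
  have "pr c (coad k b) = sum3 (cop2 DA b) (\<lambda>b1 b2 b3. pr k (SA b1 * b3) * pr c b2)"
    by (simp add: coad_def linear_sum3[OF linear_pr_right] mult.commute)
  also have "\<dots> = sum2 (DH k) (\<lambda>k1 k2. pr (SH k1 * (c * k2)) b)"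
    unfolding split sum3_sum2_swap sum3_cop2_pr ..
  also have "\<dots> = pr (c * sum2 (DH k) (\<lambda>k1 k2. SH k1 * k2)) b"
    using central by (simp add: linear_sum2[OF linear_pr_left] sum2_mult_left mult.assoc)
  also have "\<dots> = eH k * pr c b"
    by (simp add: antipode_H_left flip: scale_mult_right_H)
  finally show ?thesis .
qed

lemma pr_c_coad_mult:
  "pr c (coad k b * e) = sum3 (cop2' DA e) (\<lambda>e1 e2 e3. pr k (e1 * SA e3) * pr c (b * e2))"
proof -
  \<comment> \<open>Insert \<open>e\<^sub>2 S e\<^sub>3\<close>, exchange the legs of \<open>\<Delta>(b\<^sub>2 e\<^sub>1)\<close> by centrality, cancel \<open>S b\<^sub>1 b\<^sub>2\<close>.\<close>
  have "pr c (coad k b * e) = sum3 (cop2 DA b) (\<lambda>b1 b2 b3. pr k (SA b1 * b3) * pr c (b2 * e))"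
    by (simp add: coad_def sum3_mult_right linear_sum3[OF linear_pr_right]
        flip: scale_mult_left_A)
  also have "\<dots> = sum3 (cop2 DA b) (\<lambda>b1 b2 b3. sum3 (cop2 DA e)
      (\<lambda>e1 e2 e3. pr c (b2 * e1) * pr k (SA b1 * b3 * e2 * SA e3)))"
    by (rule sum3_cong) (simp add: sum3_cop2_antipode_right[OF linear_pr_mult_left] mult.commute)
  also have "\<dots> = sum3 (cop2 DA b) (\<lambda>b1 b2 b3. sum3 (cop2' DA e)
      (\<lambda>e1 e2 e3. pr c (b2 * e1) * pr k (SA b1 * b3 * e2 * SA e3)))"
    by (rule sum3_cong) (rule coassoc_A_pr_right[OF linear_pr_mult_left])
  also have "\<dots> = sum2 (DA b) (\<lambda>b1 q. sum2 (DA e) (\<lambda>p e3. sum2 (DA q) (\<lambda>b2 b3.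
      sum2 (DA p) (\<lambda>e1 e2. pr c (b2 * e1) * pr k (SA b1 * b3 * e2 * SA e3)))))"
    unfolding sum3_cop2 sum3_cop2' by (rule sum2_cong, rule sum2_swap)
  also have "\<dots> = sum2 (DA b) (\<lambda>b1 q. sum2 (DA e) (\<lambda>p e3. sum2 (DA q) (\<lambda>b2 b3.
      sum2 (DA p) (\<lambda>e1 e2. pr k (SA b1 * b2 * e1 * SA e3) * pr c (b3 * e2)))))"
    by (simp only: comult_mult_pr_c_swap)
  also have "\<dots> = sum3 (cop2' DA e) (\<lambda>e1 e2 e3. sum3 (cop2 DA b)
      (\<lambda>b1 b2 b3. pr k (SA b1 * b2 * (e1 * SA e3)) * pr c (b3 * e2)))"
    unfolding sum3_cop2 sum3_cop2'
    by (subst sum2_swap, rule sum2_cong, subst sum2_swap, rule sum2_cong, subst sum2_swap)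
      (simp add: mult.assoc)
  also have "\<dots> = sum3 (cop2' DA e) (\<lambda>e1 e2 e3. sum3 (cop2' DA b)
      (\<lambda>b1 b2 b3. pr k (SA b1 * b2 * (e1 * SA e3)) * pr c (b3 * e2)))"
    by (rule sum3_cong) (rule coassoc_A_pr_left[OF linear_pr_mult_right])
  also have "\<dots> = sum3 (cop2' DA e) (\<lambda>e1 e2 e3. pr k (e1 * SA e3) * pr c (b * e2))"
    by (rule sum3_cong) (rule sum3_cop2'_antipode_left[OF linear_pr_mult_right])
  finally show ?thesis .
qed

lemma pr_actH_xel:
  "pr (actH DH SH k (X b)) e
     = sum3 (cop2' DA e) (\<lambda>e1 e2 e3. pr k (e1 * SA e3) * pr c (b * e2)) - pr c b * (eA e * eH k)"
proof -
  have "pr (actH DH SH k (X b)) e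
      = sum2 (DH k) (\<lambda>k1 k2. sum3 (cop2' DA e) (\<lambda>e1 e2 e3. pr k1 e1 * pr (X b) e2 * pr (SH k2) e3))"
    by (simp add: actH_sum2 linear_sum2[OF linear_pr_left] sum3_cop2'_pr)
  also have "\<dots> = sum3 (cop2' DA e) (\<lambda>e1 e2 e3.
      sum2 (DH k) (\<lambda>k1 k2. pr k1 e1 * pr k2 (SA e3)) * (pr c (b * e2) - pr c b * eA e2))"
    by (simp add: sum2_mult_left sum2_mult_right pr_antipode pr_xel mult_ac flip: sum3_sum2_swap)
  also have "\<dots> = sum3 (cop2' DA e) (\<lambda>e1 e2 e3.
      pr k (e1 * SA e3) * pr c (b * e2) - pr c b * (pr k (e1 * SA e3) * eA e2))"
    by (simp add: pr_mult_right algebra_simps)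
  also have "\<dots> = sum3 (cop2' DA e) (\<lambda>e1 e2 e3. pr k (e1 * SA e3) * pr c (b * e2))
      - pr c b * (eA e * eH k)"
    by (simp add: sum3_diff sum3_cop2'_counit_middle flip: sum3_mult_left)
  finally show ?thesis .
qed

lemma actH_xel: "actH DH SH k (X b) = X (coad k b)"
  by (rule H_eqI) (simp add: pr_actH_xel pr_xel pr_c_coad_mult pr_c_coad mult_ac)

lemma actH_xel_expand:
  "actH DH SH k (X b) = sum3 (cop2 DA b) (\<lambda>b1 b2 b3. sH (pr k (SA b1 * b3)) (X b2))"
  by (simp add: actH_xel coad_def linear_sum3[OF linear_xel] xel_scale)

lemma qd_stable_span_xel: "qd_stable sH DH SH pr (vH.span (range X))"
  unfolding qd_stable_def
proof (intro conjI allI impI)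
  fix h x
  assume "x \<in> vH.span (range X)"
  then show "actH DH SH h x \<in> vH.span (range X)"
    by (rule span_closed_H) (auto simp: actH_add actH_scale actH_xel intro: vH.span_base)
next
  fix d x
  assume "x \<in> vH.span (range X)"
  then show "actA sH DH pr d x \<in> vH.span (range X)"
    by (rule span_closed_H) (auto simp: actA_add actA_scale actA_xel intro: vH.span_base)
qed

lemma qd_stable_span_xel_counit_kernel: "qd_stable sH DH SH pr (vH.span {X a | a. eA a = 0})"
  unfolding qd_stable_def
proof (intro conjI allI impI)
  fix h x
  assume "x \<in> vH.span {X a | a. eA a = 0}"
  then show "actH DH SH h x \<in> vH.span {X a | a. eA a = 0}"
    by (rule span_closed_H)
      (auto simp: actH_add actH_scale actH_xel eA_coad intro!: vH.span_base)
next
  fix d x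
  assume "x \<in> vH.span {X a | a. eA a = 0}"
  then show "actA sH DH pr d x \<in> vH.span {X a | a. eA a = 0}"
    by (rule span_closed_H)
      (auto simp: actA_add actA_scale actA_xel eA_mult intro!: vH.span_base)
qed

lemma dpart_xel:
  "dpart sA DA pr (X a) b = sum_list (map (\<lambda>(b1, b2). sA (pr c (a * b1)) b2) (DA b)) - sA (pr c a) b"
proof -
  have "dpart sA DA pr (X a) b
      = sum2 (DA b) (\<lambda>b1 b2. sA (pr c (a * b1)) b2) - sA (pr c a) (sum2 (DA b) (\<lambda>b1 b2. sA (eA b1) b2))"
    by (simp add: dpart_def pr_xel vA.scale_left_diff_distrib sum2_diff
        linear_sum2[OF vA.linear_scale_self] flip: sum2_def vA.scale_scale)
  then show ?thesis
    by (simp only: counit_A_left) (simp add: sum2_def)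
qed

lemma psi_inv_xel: "teq sH sA (psi_inv sH DH DA pr b (X a)) (map (\<lambda>(b1, b2). (X (a * b1), b2)) (DA b))"
  by (simp add: psi_inv_def actA_xel teq_def)

lemma actH_xel_xel:
  "actH DH SH (X a) (X b)
     = sum_list (map (\<lambda>(b1, b2, b3). sH (pr c (a * SA b1 * b3)) (X b2)) (cop2 DA b))
       - sH (pr c a) (X b)"
proof -
  have coad_one_xel: "sum3 (cop2 DA b) (\<lambda>b1 b2 b3. sH (eA (SA b1 * b3)) (X b2)) = X b"
    using arg_cong[OF coad_one[of b], of X]
    by (simp add: coad_def linear_sum3[OF linear_xel] xel_scale)
  have "actH DH SH (X a) (X b) = sum3 (cop2 DA b) (\<lambda>b1 b2 b3.
      sH (pr c (a * SA b1 * b3)) (X b2) - sH (pr c a) (sH (eA (SA b1 * b3)) (X b2)))"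
    by (simp add: actH_xel_expand pr_xel vH.scale_left_diff_distrib mult.assoc)
  also have "\<dots> = sum3 (cop2 DA b) (\<lambda>b1 b2 b3. sH (pr c (a * SA b1 * b3)) (X b2))
      - sH (pr c a) (X b)"
    by (simp only: sum3_diff linear_sum3[OF vH.linear_scale_self, symmetric] coad_one_xel)
  finally show ?thesis
    by (simp add: sum3_def)
qed

lemma psi_xel_xel:
  "teq sH sH (psi DH SH (X a) (X b))
     (map (\<lambda>(b1, b2, b3). (X b2, X (a * SA b1 * b3))) (cop2 DA b))"
  unfolding teq_def
proof (intro allI impI)
  fix f g
  assume f: "Vector_Spaces.linear sH (*) f" and g: "Vector_Spaces.linear sH (*) g"
  have f_scale: "f (sH t x) = t * f x" for t x
    using f by (simp add: Vector_Spaces.linear_iff)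
  have f_minus: "f (- x) = - f x" for x
    using f_scale[of "- 1" x] by simp
  have g_actA: "g (actA sH DH pr y x) = sum2 (DH x) (\<lambda>x1 x2. pr x1 y * g x2) - pr x y * g 1" for x y
    using g by (simp add: actA_sum2 linear_sum2[OF g] module_hom.diff module_hom.scale
        linear_iff_module_hom)
  have "sum_list (map (\<lambda>(x, y). f x * g y) (psi DH SH (X a) (X b)))
      = sum2 (DH (X a)) (\<lambda>x1 x2. f (actH DH SH x1 (X b)) * g x2) + f (- actH DH SH (X a) (X b)) * g 1"
    unfolding psi_def map_append sum_list_append sum2_def[symmetric] by (simp add: sum2_map_pair)
  also have "\<dots> = sum2 (DH (X a)) (\<lambda>x1 x2. sum3 (cop2 DA b) (\<lambda>b1 b2 b3. f (X b2) * (pr x1 (SA b1 * b3) * g x2)))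
      - sum3 (cop2 DA b) (\<lambda>b1 b2 b3. f (X b2) * (pr (X a) (SA b1 * b3) * g 1))"
    by (simp add: actH_xel_expand linear_sum3[OF f] f_minus f_scale sum3_mult_right sum3_mult_left mult_ac)
  also have "\<dots> = sum3 (cop2 DA b) (\<lambda>b1 b2 b3. f (X b2)
      * (sum2 (DH (X a)) (\<lambda>x1 x2. pr x1 (SA b1 * b3) * g x2) - pr (X a) (SA b1 * b3) * g 1))"
    by (simp add: sum2_mult_left right_diff_distrib sum3_diff flip: sum3_sum2_swap)
  also have "\<dots> = sum3 (cop2 DA b) (\<lambda>b1 b2 b3. f (X b2) * g (X (a * (SA b1 * b3))))"
    by (simp add: actA_xel flip: g_actA)
  also have "\<dots> = sum_list (map (\<lambda>(x, y). f x * g y)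
      (map (\<lambda>(b1, b2, b3). (X b2, X (a * SA b1 * b3))) (cop2 DA b)))"
    unfolding sum2_def[symmetric] by (simp add: sum2_map_triple mult.assoc)
  finally show "sum_list (map (\<lambda>(x, y). f x * g y) (psi DH SH (X a) (X b)))
      = sum_list (map (\<lambda>(x, y). f x * g y)
          (map (\<lambda>(b1, b2, b3). (X b2, X (a * SA b1 * b3))) (cop2 DA b)))" .
qed

end

theorem proposition2p6:
  fixes sH :: "complex \<Rightarrow> 'h::ring_1 \<Rightarrow> 'h" and \<Delta>H :: "'h \<Rightarrow> ('h \<times> 'h) list"
    and \<epsilon>H :: "'h \<Rightarrow> complex" and SH :: "'h \<Rightarrow> 'h"
    and sA :: "complex \<Rightarrow> 'a::ring_1 \<Rightarrow> 'a" and \<Delta>A :: "'a \<Rightarrow> ('a \<times> 'a) list"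
    and \<epsilon>A :: "'a \<Rightarrow> complex" and SA :: "'a \<Rightarrow> 'a"
    and pr :: "'h \<Rightarrow> 'a \<Rightarrow> complex" and c :: 'h
  assumes hp: "hopf_pairing sH \<Delta>H \<epsilon>H SH sA \<Delta>A \<epsilon>A SA pr"
    and central: "\<forall>h. c * h = h * c"
    and nontriv: "c \<notin> Modules.module.span sH {1}"
  shows "(qd_stable sH \<Delta>H SH pr (Modules.module.span sH (range (xel sH \<Delta>H pr c))))
     \<and> (qd_stable sH \<Delta>H SH pr (Modules.module.span sH {xel sH \<Delta>H pr c a | a. \<epsilon>A a = 0}))
     \<and> (\<forall>a b. dpart sA \<Delta>A pr (xel sH \<Delta>H pr c a) b =
           sum_list (map (\<lambda>(b1, b2). sA (pr c (a * b1)) b2) (\<Delta>A b)) - sA (pr c a) b)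
     \<and> (\<forall>a b. teq sH sA (psi_inv sH \<Delta>H \<Delta>A pr b (xel sH \<Delta>H pr c a))
           (map (\<lambda>(b1, b2). (xel sH \<Delta>H pr c (a * b1), b2)) (\<Delta>A b)))
     \<and> (\<forall>a b. actH \<Delta>H SH (xel sH \<Delta>H pr c a) (xel sH \<Delta>H pr c b) =
           sum_list (map (\<lambda>(b1, b2, b3). sH (pr c (a * SA b1 * b3)) (xel sH \<Delta>H pr c b2))
             (cop2 \<Delta>A b))
           - sH (pr c a) (xel sH \<Delta>H pr c b))
     \<and> (\<forall>a b. teq sH sH (psi \<Delta>H SH (xel sH \<Delta>H pr c a) (xel sH \<Delta>H pr c b))
           (map (\<lambda>(b1, b2, b3). (xel sH \<Delta>H pr c b2, xel sH \<Delta>H pr c (a * SA b1 * b3)))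
             (cop2 \<Delta>A b)))"
proof -
  interpret central_element sH \<Delta>H \<epsilon>H SH sA \<Delta>A \<epsilon>A SA pr c
    using hp central by unfold_locales
  show ?thesis
    using qd_stable_span_xel qd_stable_span_xel_counit_kernel dpart_xel psi_inv_xel
      actH_xel_xel psi_xel_xel by blast
qed

end
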